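(* Consider a Boolean control network in algebraic form $$\mathbf{x}(t+1)=L\ltimes \mathbf{u}(t)\ltimes \mathbf{x}(t),\qquad \mathbf{y}(t)=H\mathbf{x}(t),\qquad t\in\mathbb{Z}_+,$$ with $\mathbf{x}(t)\in\mathcal{L}_N$, $\mathbf{u}(t)\in\mathcal{L}_M$, $\mathbf{y}(t)\in\mathcal{L}_P$, $L\in\mathcal{L}_{N\times NM}$, $H\in\mathcal{L}_{P\times N}$, and let $\{\mathbf{y}_r(t)\}_{t=1}^T$, $\mathbf{y}_r(t)\in\mathcal{L}_P$, be a finite-length reference output trajectory. Let $\mathcal{X}_1$ be the set of initial states $\mathbf{x}_1$ of all state trajectories $\{\mathbf{x}_t\}_{t=1}^T$ generated by the network (i.e. $\mathbf{x}_{t+1}=L\ltimes\mathbf{u}_t\ltimes\mathbf{x}_t$ for some $\mathbf{u}_t\in\mathcal{L}_M$, $t\in[1,T-1]$) that are compatible with the reference, i.e. $H\mathbf{x}_t=\mathbf{y}_r(t)$ for all $t\in[1,T]$. Then the following are equivalent: (i) the trajectory $\{\mathbf{y}_r(t)\}_{t=1}^T$ is trackable from every initial state $\mathbf{x}_0\in\mathcal{L}_N$; (ii) $\mathcal{X}_1\neq\emptyset$ and for every $\mathbf{x}_0\in\mathcal{L}_N$ there exists $\mathbf{u}\in\mathcal{L}_M$ such that $L\ltimes\mathbf{u}\ltimes\mathbf{x}_0\in\mathcal{X}_1$.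
   Context: $\delta_k^i$ denotes the $i$-th canonical vector of $\mathbb{R}^k$; $\mathcal{L}_k$ is the set of canonical vectors of $\mathbb{R}^k$, and $\mathcal{L}_{k\times q}$ the set of $k\times q$ matrices whose columns are in $\mathcal{L}_k$. $N=2^n$, $M=2^m$, $P=2^p$. Writing $L=[L_1\,|\,L_2\,|\,\cdots\,|\,L_M]$ with $L_i\in\mathcal{L}_{N\times N}$, the semi-tensor product satisfies $L\ltimes\delta_M^i\ltimes\mathbf{x}=L_i\mathbf{x}$ for $\mathbf{x}\in\mathcal{L}_N$. For $k\ge1$, $\mathbf{y}(k,\mathbf{x}(0),\{\mathbf{u}(t)\}_{t=0}^{k-1})$ denotes the output at time $k$ obtained from initial state $\mathbf{x}(0)$ applying inputs $\mathbf{u}(0),\dots,\mathbf{u}(k-1)$. The trajectory $\{\mathbf{y}_r(t)\}_{t=1}^T$ is trackable from $\mathbf{x}_0$ if there exist $\mathbf{u}(0),\dots,\mathbf{u}(T-1)\in\mathcal{L}_M$ such that $\mathbf{y}(t,\mathbf{x}_0,\{\mathbf{u}(\tau)\}_{\tau=0}^{t-1})=\mathbf{y}_r(t)$ for all $t\in[1,T]$. *)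

theory Defs
  imports Main
begin

(* A canonical vector delta_k^(i+1) in L_k is represented by its 0-based index i < k.
   A logical matrix A = delta_k[i_1,...,i_q] in L_{k x q} is represented by its
   column-index function  col :: nat => nat  (column j (0-based) is delta_k^(col j + 1)),
   with col j < k for all j < q. *)

definition logical_matrix :: "nat \<Rightarrow> nat \<Rightarrow> (nat \<Rightarrow> nat) \<Rightarrow> bool" where
  "logical_matrix k q col \<longleftrightarrow> (\<forall>j<q. col j < k)"

(* matrix-vector product of a logical matrix with a canonical vector:
   A delta_q^(j+1) = column j of A *)
definition lmv :: "(nat \<Rightarrow> nat) \<Rightarrow> nat \<Rightarrow> nat" where
  "lmv col j = col j"

(* semi-tensor product  L \<ltimes> delta_M^(u+1) \<ltimes> delta_N^(x+1) = L_(u+1) delta_N^(x+1)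
   = column  u*N + x  (0-based) of L, for L = [L_1 | ... | L_M] in L_{N x NM} *)
definition stp_step :: "(nat \<Rightarrow> nat) \<Rightarrow> nat \<Rightarrow> nat \<Rightarrow> nat \<Rightarrow> nat" where
  "stp_step L N u x = L (u * N + x)"

primrec state :: "(nat \<Rightarrow> nat) \<Rightarrow> nat \<Rightarrow> nat \<Rightarrow> (nat \<Rightarrow> nat) \<Rightarrow> nat \<Rightarrow> nat" where
  "state L N x0 us 0 = x0"
| "state L N x0 us (Suc t) = stp_step L N (us t) (state L N x0 us t)"

definition bcn_output :: "(nat \<Rightarrow> nat) \<Rightarrow> (nat \<Rightarrow> nat) \<Rightarrow> nat \<Rightarrow> nat \<Rightarrow> (nat \<Rightarrow> nat) \<Rightarrow> nat \<Rightarrow> nat" where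
  "bcn_output L H N x0 us t = lmv H (state L N x0 us t)"

definition trackable ::
  "(nat \<Rightarrow> nat) \<Rightarrow> (nat \<Rightarrow> nat) \<Rightarrow> nat \<Rightarrow> nat \<Rightarrow> nat \<Rightarrow> (nat \<Rightarrow> nat) \<Rightarrow> nat \<Rightarrow> bool" where
  "trackable L H N M T yr x0 \<longleftrightarrow>
     (\<exists>us. (\<forall>t<T. us t < M) \<and> (\<forall>t\<in>{1..T}. bcn_output L H N x0 us t = yr t))"

definition X1 ::
  "(nat \<Rightarrow> nat) \<Rightarrow> (nat \<Rightarrow> nat) \<Rightarrow> nat \<Rightarrow> nat \<Rightarrow> nat \<Rightarrow> (nat \<Rightarrow> nat) \<Rightarrow> nat set" where
  "X1 L H N M T yr = {x1. \<exists>xs. xs 1 = x1 \<and> (\<forall>t\<in>{1..T}. xs t < N)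
       \<and> (\<forall>t\<in>{1..T-1}. \<exists>u<M. xs (t+1) = stp_step L N u (xs t))
       \<and> (\<forall>t\<in>{1..T}. lmv H (xs t) = yr t)}"

end

theory Submission
  imports Defs
begin

text \<open>Trackability from \<open>x\<^sub>0\<close> splits into a first input \<open>u\<close> and a tracking run from
  \<open>L \<ltimes> u \<ltimes> x\<^sub>0\<close>; such runs from a state \<open>x\<^sub>1\<close> are exactly the reference-compatible state
  trajectories starting at \<open>x\<^sub>1\<close>, i.e. they witness \<open>x\<^sub>1 \<in> \<X>\<^sub>1\<close>. Hence \<open>y\<^sub>r\<close> is trackable from
  \<open>x\<^sub>0\<close> iff some input steps \<open>x\<^sub>0\<close> into \<open>\<X>\<^sub>1\<close>, and nonemptiness of \<open>\<X>\<^sub>1\<close> comes for free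
  because \<open>\<L>\<^sub>N\<close> is nonempty.\<close>

lemma stp_step_less:
  assumes "logical_matrix N (N * M) L" "u < M" "x < N"
  shows "stp_step L N u x < N"
proof -
  have "u * N + x < (u + 1) * N" using assms(3) by simp
  also have "\<dots> \<le> M * N" using assms(2) by (intro mult_right_mono) auto
  finally have "u * N + x < N * M" by (simp add: mult.commute)
  then show ?thesis using assms(1) by (simp add: logical_matrix_def stp_step_def)
qed

lemma state_less:
  assumes "logical_matrix N (N * M) L" "x0 < N" "\<forall>s<t. us s < M"
  shows "state L N x0 us t < N"
  using assms(3) by (induction t) (auto intro: stp_step_less[OF assms(1)] simp: assms(2))

lemma state_Suc_shift:
  "state L N x0 us (Suc t) = state L N (stp_step L N (us 0) x0) (\<lambda>s. us (Suc s)) t"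
  by (induction t) simp_all

lemma state_eq_trajectory:
  assumes "\<forall>s<k. xs (Suc s) = stp_step L N (us s) (xs s)" "t \<le> k"
  shows "state L N (xs 0) us t = xs t"
  using assms(2) by (induction t) (simp_all add: assms(1))

text \<open>Time \<open>t\<close> of the run is time \<open>t + 1\<close> of the reference, matching the indexing
  \<open>x\<^sub>1, \<dots>, x\<^sub>T\<close> of the trajectories defining \<open>\<X>\<^sub>1\<close>.\<close>

definition tracking_run ::
  "(nat \<Rightarrow> nat) \<Rightarrow> (nat \<Rightarrow> nat) \<Rightarrow> nat \<Rightarrow> nat \<Rightarrow> nat \<Rightarrow> (nat \<Rightarrow> nat) \<Rightarrow> nat \<Rightarrow> (nat \<Rightarrow> nat) \<Rightarrow> bool"
  where "tracking_run L H N M T yr x1 us \<longleftrightarrow>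
    (\<forall>t<T - 1. us t < M) \<and> (\<forall>t<T. lmv H (state L N x1 us t) = yr (Suc t))"

lemma X1_iff_tracking_run:
  assumes "logical_matrix N (N * M) L" "T \<ge> 1"
  shows "x1 \<in> X1 L H N M T yr \<longleftrightarrow> x1 < N \<and> (\<exists>us. tracking_run L H N M T yr x1 us)"
  unfolding tracking_run_def
proof
  assume "x1 \<in> X1 L H N M T yr"
  then obtain xs where xs: "xs 1 = x1" "\<forall>t\<in>{1..T}. xs t < N"
      "\<forall>t\<in>{1..T-1}. \<exists>u<M. xs (t+1) = stp_step L N u (xs t)"
      "\<forall>t\<in>{1..T}. lmv H (xs t) = yr t"
    unfolding X1_def by blast
  have "\<forall>t. \<exists>u. t < T - 1 \<longrightarrow> u < M \<and> xs (Suc (Suc t)) = stp_step L N u (xs (Suc t))"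
    using xs(3) by (metis Suc_eq_plus1 Suc_leI atLeastAtMost_iff le_add2)
  then obtain us where us: "\<forall>t<T - 1. us t < M \<and> xs (Suc (Suc t)) = stp_step L N (us t) (xs (Suc t))"
    by metis
  have run: "state L N x1 us t = xs (Suc t)" if "t < T" for t
    using state_eq_trajectory[of "T - 1" "\<lambda>t. xs (Suc t)" L N us t] us xs(1) that by simp
  have "x1 < N" using xs(1,2) assms(2) by auto
  moreover have "\<forall>t<T - 1. us t < M" using us by blast
  moreover have "\<forall>t<T. lmv H (state L N x1 us t) = yr (Suc t)" using run xs(4) by simp
  ultimately show "x1 < N \<and>
    (\<exists>us. (\<forall>t<T - 1. us t < M) \<and> (\<forall>t<T. lmv H (state L N x1 us t) = yr (Suc t)))"
    by blast
next
  assume "x1 < N \<and>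
    (\<exists>us. (\<forall>t<T - 1. us t < M) \<and> (\<forall>t<T. lmv H (state L N x1 us t) = yr (Suc t)))"
  then obtain us where x1: "x1 < N" and us: "\<forall>t<T - 1. us t < M"
      and out: "\<forall>t<T. lmv H (state L N x1 us t) = yr (Suc t)"
    by blast
  define xs where "xs t = state L N x1 us (t - 1)" for t
  show "x1 \<in> X1 L H N M T yr"
    unfolding X1_def
  proof (intro CollectI exI[of _ xs] conjI ballI)
    show "xs 1 = x1" by (simp add: xs_def)
  next
    fix t assume "t \<in> {1..T}"
    then show "xs t < N" unfolding xs_def using us by (intro state_less[OF assms(1) x1]) auto
  next
    fix t assume "t \<in> {1..T-1}"
    then obtain s where "t = Suc s" "s < T - 1" by (cases t) auto
    then show "\<exists>u<M. xs (t+1) = stp_step L N u (xs t)"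
      using us by (auto simp: xs_def intro!: exI[of _ "us s"])
  next
    fix t assume "t \<in> {1..T}"
    then show "lmv H (xs t) = yr t" using out by (cases t) (auto simp: xs_def)
  qed
qed

lemma trackable_iff_first_input:
  assumes "T \<ge> 1"
  shows "trackable L H N M T yr x0 \<longleftrightarrow>
    (\<exists>u<M. \<exists>vs. tracking_run L H N M T yr (stp_step L N u x0) vs)"
  unfolding tracking_run_def
proof
  assume "trackable L H N M T yr x0"
  then obtain us where us: "\<forall>t<T. us t < M" "\<forall>t\<in>{1..T}. bcn_output L H N x0 us t = yr t"
    unfolding trackable_def by blast
  have "lmv H (state L N (stp_step L N (us 0) x0) (\<lambda>s. us (Suc s)) t) = yr (Suc t)"
    if "t < T" for t
  proof -
    have "bcn_output L H N x0 us (Suc t) = yr (Suc t)" using us(2) that by simp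
    then show ?thesis by (simp only: bcn_output_def state_Suc_shift)
  qed
  moreover have "us 0 < M" "\<forall>t<T - 1. us (Suc t) < M" using us(1) assms by auto
  ultimately show "\<exists>u<M. \<exists>vs. (\<forall>t<T - 1. vs t < M) \<and>
    (\<forall>t<T. lmv H (state L N (stp_step L N u x0) vs t) = yr (Suc t))"
    by (intro exI[of _ "us 0"] conjI exI[of _ "\<lambda>s. us (Suc s)"]) blast+
next
  assume "\<exists>u<M. \<exists>vs. (\<forall>t<T - 1. vs t < M) \<and>
    (\<forall>t<T. lmv H (state L N (stp_step L N u x0) vs t) = yr (Suc t))"
  then obtain u vs where u: "u < M" and vs: "\<forall>t<T - 1. vs t < M"
      and out: "\<forall>t<T. lmv H (state L N (stp_step L N u x0) vs t) = yr (Suc t)"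
    by blast
  define us where "us = case_nat u vs"
  have "us t < M" if "t < T" for t
    using that u vs by (cases t) (simp_all add: us_def)
  moreover have "bcn_output L H N x0 us t = yr t" if t: "t \<in> {1..T}" for t
  proof -
    obtain s where "t = Suc s" "s < T" using t by (cases t) auto
    then show ?thesis
      using out by (simp add: bcn_output_def state_Suc_shift us_def del: state.simps)
  qed
  ultimately show "trackable L H N M T yr x0" unfolding trackable_def by blast
qed

lemma trackable_iff_step_into_X1:
  assumes "logical_matrix N (N * M) L" "T \<ge> 1" "x0 < N"
  shows "trackable L H N M T yr x0 \<longleftrightarrow> (\<exists>u<M. stp_step L N u x0 \<in> X1 L H N M T yr)"
  unfolding trackable_iff_first_input[OF assms(2)] X1_iff_tracking_run[OF assms(1,2)]
  using stp_step_less[OF assms(1) _ assms(3)] by blast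

theorem theorem1:
  fixes n m p T :: nat and N M P :: nat
    and L H :: "nat \<Rightarrow> nat" and yr :: "nat \<Rightarrow> nat"
  assumes "N = 2 ^ n" and "M = 2 ^ m" and "P = 2 ^ p"
    and "logical_matrix N (N * M) L"
    and "logical_matrix P N H"
    and "T \<ge> 1"
    and "\<forall>t\<in>{1..T}. yr t < P"
  shows "(\<forall>x0<N. trackable L H N M T yr x0) \<longleftrightarrow>
         (X1 L H N M T yr \<noteq> {} \<and>
          (\<forall>x0<N. \<exists>u<M. stp_step L N u x0 \<in> X1 L H N M T yr))"
proof -
  have "0 < N" using assms(1) by simp
  then show ?thesis
    using trackable_iff_step_into_X1[OF assms(4,6)] by blast
qed

end
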